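(* In the continuous Donation Game, let $\chi\ge1$ and $0\le\kappa\le b(K)-c(K)$, and let $D:=\chi b(K)+c(K)$. Suppose $$\lambda\ge\frac{b(K)+\chi c(K)}{\chi b(K)+c(K)},$$ and $p_0\in[0,1]$ satisfies $$\frac{(\chi-1)\kappa-\lambda D+b(K)+\chi c(K)}{(1-\lambda)D}\le p_0\le\frac{(\chi-1)\kappa}{(1-\lambda)D}.$$ Define, for $x\in\{0,K\}$ and $y\in[0,K]$, $$p(x,y)=\frac{1}{\lambda}\left(\frac{b(y)+\chi c(y)+(\chi-1)\kappa}{D}-(1-\lambda)p_0\right).$$ Then $p(x,y)\in[0,1]$, and the memory-one strategy for $X$ with $\sigma_X^0=(1-p_0)\delta_0+p_0\delta_K$ and $\sigma_X[x,y]=(1-p(x,y))\delta_0+p(x,y)\delta_K$ enforces $\pi_X-\kappa=\chi(\pi_Y-\kappa)$ against every behavioral strategy of $Y$.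
   Context: Continuous Donation Game: fix $K>0$ and measurable nondecreasing functions $b,c:[0,K]\to\mathbb{R}$ with $b(0)=c(0)=0$ and $b(s)>c(s)$ for $s>0$. Action spaces $S_X=S_Y=[0,K]$ (for two-point strategies $X$ only uses actions in $\{0,K\}$), payoffs $u_X(x,y)=b(y)-c(x)$, $u_Y(x,y)=b(x)-c(y)$, discount factor $\lambda\in(0,1)$. Repeated-game framework: histories $\mathcal{H}=\bigsqcup_T(S_X\times S_Y)^T$; a behavioral strategy is a Markov kernel from histories to the player's action space; a memory-one strategy for $X$ consists of an initial probability measure $\sigma_X^0$ and a Markov kernel $\sigma_X[x,y]$ applied to the previous action pair. The strategies generate, via $\mu_0=\sigma_X[\varnothing]\otimes\sigma_Y[\varnothing]$ and $\mu_t(E'\times E)=\int_{E'}(\sigma_X[h]\otimes\sigma_Y[h])(E)\,d\mu_{t-1}(h)$, the laws $\nu_t(E)=\mu_t(\mathcal{H}^t\times E)$ of the action pair at time $t$, and $\pi_X=(1-\lambda)\sum_t\lambda^t\int u_X\,d\nu_t$, $\pi_Y=(1-\lambda)\sum_t\lambda^t\int u_Y\,d\nu_t$. $\delta_s$ is the Dirac measure at $s$. *)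

theory Defs
  imports "HOL-Probability.Probability"
begin

definition act_space :: "real \<Rightarrow> real measure" where
  "act_space K = restrict_space borel {0..K}"

definition pair_space :: "real \<Rightarrow> (real \<times> real) measure" where
  "pair_space K = act_space K \<Otimes>\<^sub>M act_space K"

text \<open>Histories of length T: (S_X x S_Y)^T, encoded as extensional functions on {..<T}.
  The history space H is the disjoint union over T of these.\<close>
definition hist_space :: "real \<Rightarrow> nat \<Rightarrow> (nat \<Rightarrow> real \<times> real) measure" where
  "hist_space K T = PiM {..<T} (\<lambda>_. pair_space K)"

definition behavioral_strategy ::
  "real \<Rightarrow> (nat \<Rightarrow> (nat \<Rightarrow> real \<times> real) \<Rightarrow> real measure) \<Rightarrow> bool" where
  "behavioral_strategy K \<sigma> \<longleftrightarrow>
     (\<forall>T. \<sigma> T \<in> hist_space K T \<rightarrow>\<^sub>M prob_algebra (act_space K))"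

definition memory_one ::
  "real measure \<Rightarrow> (real \<times> real \<Rightarrow> real measure) \<Rightarrow> nat \<Rightarrow> (nat \<Rightarrow> real \<times> real) \<Rightarrow> real measure" where
  "memory_one \<sigma>0 k T h = (if T = 0 then \<sigma>0 else k (h (T - 1)))"

definition two_point :: "real \<Rightarrow> real \<Rightarrow> real measure" where
  "two_point K q = measure_of (space (act_space K)) (sets (act_space K))
     (\<lambda>E. ennreal (1 - q) * emeasure (return (act_space K) 0) E
          + ennreal q * emeasure (return (act_space K) K) E)"

text \<open>mu_t: law of the history of length t+1 (action pairs at times 0..t).
  mu_0 = sigma_X[empty] (x) sigma_Y[empty];
  mu_t(E' x E) = integral over E' of (sigma_X[h] (x) sigma_Y[h])(E) d mu_{t-1}(h).\<close>
fun play :: "real \<Rightarrow> (nat \<Rightarrow> (nat \<Rightarrow> real \<times> real) \<Rightarrow> real measure)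
    \<Rightarrow> (nat \<Rightarrow> (nat \<Rightarrow> real \<times> real) \<Rightarrow> real measure) \<Rightarrow> nat \<Rightarrow> (nat \<Rightarrow> real \<times> real) measure" where
  "play K \<sigma>X \<sigma>Y 0 =
     distr (\<sigma>X 0 (\<lambda>_. undefined) \<Otimes>\<^sub>M \<sigma>Y 0 (\<lambda>_. undefined)) (hist_space K 1)
       (\<lambda>a. (\<lambda>i\<in>{..<1}. a))"
| "play K \<sigma>X \<sigma>Y (Suc t) =
     bind (play K \<sigma>X \<sigma>Y t)
       (\<lambda>h. distr (\<sigma>X (Suc t) h \<Otimes>\<^sub>M \<sigma>Y (Suc t) h) (hist_space K (Suc (Suc t)))
              (\<lambda>a. h(Suc t := a)))"

definition action_law :: "real \<Rightarrow> (nat \<Rightarrow> (nat \<Rightarrow> real \<times> real) \<Rightarrow> real measure)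
    \<Rightarrow> (nat \<Rightarrow> (nat \<Rightarrow> real \<times> real) \<Rightarrow> real measure) \<Rightarrow> nat \<Rightarrow> (real \<times> real) measure" where
  "action_law K \<sigma>X \<sigma>Y t = distr (play K \<sigma>X \<sigma>Y t) (pair_space K) (\<lambda>h. h t)"

definition payoff_X :: "(real \<Rightarrow> real) \<Rightarrow> (real \<Rightarrow> real) \<Rightarrow> real \<Rightarrow> real
    \<Rightarrow> (nat \<Rightarrow> (nat \<Rightarrow> real \<times> real) \<Rightarrow> real measure)
    \<Rightarrow> (nat \<Rightarrow> (nat \<Rightarrow> real \<times> real) \<Rightarrow> real measure) \<Rightarrow> real" where
  "payoff_X b c K lam \<sigma>X \<sigma>Y = (1 - lam) *
     (\<Sum>t. lam ^ t * (\<integral>a. b (snd a) - c (fst a) \<partial>(action_law K \<sigma>X \<sigma>Y t)))"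

definition payoff_Y :: "(real \<Rightarrow> real) \<Rightarrow> (real \<Rightarrow> real) \<Rightarrow> real \<Rightarrow> real
    \<Rightarrow> (nat \<Rightarrow> (nat \<Rightarrow> real \<times> real) \<Rightarrow> real measure)
    \<Rightarrow> (nat \<Rightarrow> (nat \<Rightarrow> real \<times> real) \<Rightarrow> real measure) \<Rightarrow> real" where
  "payoff_Y b c K lam \<sigma>X \<sigma>Y = (1 - lam) *
     (\<Sum>t. lam ^ t * (\<integral>a. b (fst a) - c (snd a) \<partial>(action_law K \<sigma>X \<sigma>Y t)))"

end

theory Submission
  imports Defs
begin

text \<open>
  Write \<open>G x = \<chi> b(x) + c(x)\<close>, so that \<open>G 0 = 0\<close> and \<open>G K = D\<close>. Pointwise,
  \<open>u\<^sub>X - \<kappa> - \<chi> (u\<^sub>Y - \<kappa>) = (b y + \<chi> c y + (\<chi> - 1) \<kappa>) - G x = \<lambda> D p(y) + (1 - \<lambda>) D p\<^sub>0 - G x\<close>.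
  Since X plays \<open>K\<close> with probability \<open>p(y\<^sub>t)\<close> in round \<open>t + 1\<close> and with probability \<open>p\<^sub>0\<close>
  in round 0, the expected value \<open>x\<^sub>t\<close> of \<open>G\<close> at X's action in round \<open>t\<close> satisfies
  \<open>x\<^sub>t\<^sub>+\<^sub>1 = D \<bbbE>[p(y\<^sub>t)]\<close> and \<open>x\<^sub>0 = D p\<^sub>0\<close>. Hence the discounted sum of
  \<open>\<lambda> D p(y\<^sub>t) - G(x\<^sub>t)\<close> telescopes to \<open>-x\<^sub>0\<close>, and the constant terms cancel exactly.
\<close>

lemma space_act_space: "space (act_space K) = {0..K}"
  by (simp add: act_space_def space_restrict_space)

lemma space_pair_space: "space (pair_space K) = {0..K} \<times> {0..K}"
  by (simp add: pair_space_def space_pair_measure space_act_space)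

lemma singleton_in_sets_act_space: "x \<in> {0..K} \<Longrightarrow> {x} \<in> sets (act_space K)"
  unfolding act_space_def by (auto simp: sets_restrict_space_iff)

subsection \<open>Two-point measures\<close>

lemma sets_two_point [simp]: "sets (two_point K q) = sets (act_space K)"
  unfolding two_point_def by (simp add: sets.sets_measure_of_eq)

lemma space_two_point [simp]: "space (two_point K q) = space (act_space K)"
  by (rule sets_eq_imp_space_eq) simp

lemma emeasure_two_point:
  assumes A: "A \<in> sets (act_space K)"
  shows "emeasure (two_point K q) A = ennreal (1 - q) * indicator A 0 + ennreal q * indicator A K"
proof -
  let ?M = "act_space K"
  let ?\<mu> = "\<lambda>E. ennreal (1 - q) * emeasure (return ?M 0) E + ennreal q * emeasure (return ?M K) E"
  have "countably_additive (sets ?M) ?\<mu>"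
  proof (unfold countably_additive_def, intro allI impI)
    fix F :: "nat \<Rightarrow> real set"
    assume F: "range F \<subseteq> sets ?M" "disjoint_family F" "\<Union> (range F) \<in> sets ?M"
    have "(\<Sum>i. emeasure (return ?M z) (F i)) = emeasure (return ?M z) (\<Union> (range F))" for z
      using F by (intro suminf_emeasure) auto
    then show "(\<Sum>i. ?\<mu> (F i)) = ?\<mu> (\<Union> (range F))"
      by (subst suminf_add[symmetric]) auto
  qed
  then have "emeasure (two_point K q) A = ?\<mu> A"
    unfolding two_point_def
    by (intro emeasure_measure_of_sigma[OF sets.sigma_algebra_axioms _ _ A]) (auto simp: positive_def)
  then show ?thesis
    using A by simp
qed

lemma prob_space_two_point:
  assumes "K > 0" "0 \<le> q" "q \<le> 1"
  shows "prob_space (two_point K q)"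
proof (rule prob_spaceI)
  have "space (act_space K) \<in> sets (act_space K)"
    by simp
  then show "emeasure (two_point K q) (space (two_point K q)) = 1"
    using assms
    by (simp add: emeasure_two_point space_act_space ennreal_plus[symmetric] del: ennreal_plus)
qed

lemma integral_two_point:
  fixes F :: "real \<Rightarrow> real"
  assumes K: "K > 0" and q: "0 \<le> q" "q \<le> 1" and F: "F \<in> borel_measurable (act_space K)"
  shows "(\<integral>x. F x \<partial>two_point K q) = (1 - q) * F 0 + q * F K"
proof -
  interpret prob_space "two_point K q"
    by (rule prob_space_two_point[OF assms(1-3)])
  have s0: "{0} \<in> sets (act_space K)" and sK: "{K} \<in> sets (act_space K)"
    using K by (auto intro: singleton_in_sets_act_space)
  have N: "space (act_space K) - {0, K} \<in> sets (act_space K)"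
    using s0 sK by (metis Diff_insert sets.Diff sets.top)
  then have "emeasure (two_point K q) (space (act_space K) - {0, K}) = 0"
    by (simp add: emeasure_two_point)
  then have "AE x in two_point K q. x \<in> {0, K}"
    using N by (intro AE_I'[where N="space (act_space K) - {0, K}"]) auto
  then have "(\<integral>x. F x \<partial>two_point K q)
      = (\<integral>x. F 0 * indicator {0} x + F K * indicator {K} x \<partial>two_point K q)"
    using K s0 sK
    by (intro integral_cong_AE)
       (auto simp: F measurable_cong_sets[OF sets_two_point refl] split: split_indicator)
  also have "\<dots> = F 0 * measure (two_point K q) {0} + F K * measure (two_point K q) {K}"
    using s0 sK
    by (subst Bochner_Integration.integral_add)
       (auto intro!: integrable_real_mult_indicator simp: less_top[symmetric])
  also have "measure (two_point K q) {0} = 1 - q"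
    using s0 K q by (simp add: measure_def emeasure_two_point)
  also have "measure (two_point K q) {K} = q"
    using sK K q by (simp add: measure_def emeasure_two_point)
  finally show ?thesis
    by simp
qed

subsection \<open>The law of the play\<close>

lemma measurable_hist_component:
  "t < T \<Longrightarrow> (\<lambda>h. h t) \<in> hist_space K T \<rightarrow>\<^sub>M pair_space K"
  unfolding hist_space_def by (rule measurable_component_singleton) auto

lemma measurable_hist_update:
  "(\<lambda>(h, a). h(T := a)) \<in> hist_space K T \<Otimes>\<^sub>M pair_space K \<rightarrow>\<^sub>M hist_space K (Suc T)"
proof -
  have "(\<lambda>x. (fst x)(T := snd x)) \<in> hist_space K T \<Otimes>\<^sub>M pair_space K \<rightarrow>\<^sub>M hist_space K (Suc T)"
    unfolding hist_space_def by (rule measurable_fun_upd[where J="{..<T}"]) auto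
  then show ?thesis
    by (simp add: case_prod_beta')
qed

lemma behavioral_strategy_in_prob_algebra:
  assumes "behavioral_strategy K \<sigma>" "h \<in> space (hist_space K T)"
  shows "\<sigma> T h \<in> space (prob_algebra (act_space K))"
  using assms by (auto simp: behavioral_strategy_def dest: measurable_space)

lemma measurable_play_step_kernel:
  assumes "behavioral_strategy K \<sigma>X" "behavioral_strategy K \<sigma>Y"
  shows "(\<lambda>h. distr (\<sigma>X (Suc t) h \<Otimes>\<^sub>M \<sigma>Y (Suc t) h) (hist_space K (Suc (Suc t))) (\<lambda>a. h(Suc t := a)))
     \<in> hist_space K (Suc t) \<rightarrow>\<^sub>M prob_algebra (hist_space K (Suc (Suc t)))"
proof (rule measurable_distr_prob_space2)
  show "(\<lambda>h. \<sigma>X (Suc t) h \<Otimes>\<^sub>M \<sigma>Y (Suc t) h) \<in> hist_space K (Suc t) \<rightarrow>\<^sub>M prob_algebra (pair_space K)"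
    unfolding pair_space_def
    using assms by (intro measurable_pair_prob) (auto simp: behavioral_strategy_def)
qed (rule measurable_hist_update)

lemma play_in_prob_algebra:
  assumes X: "behavioral_strategy K \<sigma>X" and Y: "behavioral_strategy K \<sigma>Y"
  shows "play K \<sigma>X \<sigma>Y t \<in> space (prob_algebra (hist_space K (Suc t)))"
proof (induction t)
  case 0
  have "(\<lambda>_. undefined) \<in> space (hist_space K 0)"
    unfolding hist_space_def by (simp add: space_PiM)
  then have "\<sigma>X 0 (\<lambda>_. undefined) \<Otimes>\<^sub>M \<sigma>Y 0 (\<lambda>_. undefined) \<in> space (prob_algebra (pair_space K))"
    using behavioral_strategy_in_prob_algebra[OF X] behavioral_strategy_in_prob_algebra[OF Y]
    by (auto simp: space_prob_algebra pair_space_def intro!: prob_space_pair sets_pair_measure_cong)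
  moreover have "(\<lambda>a. (\<lambda>i\<in>{..<1::nat}. a)) \<in> pair_space K \<rightarrow>\<^sub>M hist_space K 1"
    unfolding hist_space_def by (rule measurable_restrict) auto
  ultimately show ?case
    using measurable_space[OF measurable_distr_prob_space] by simp
next
  case (Suc t)
  note k = measurable_play_step_kernel[OF X Y, of t]
  show ?case
    using prob_space_bind'[OF Suc k] sets_bind'[OF Suc k] by (simp add: space_prob_algebra)
qed

lemma
  assumes "behavioral_strategy K \<sigma>X" "behavioral_strategy K \<sigma>Y"
  shows sets_play: "sets (play K \<sigma>X \<sigma>Y t) = sets (hist_space K (Suc t))"
    and prob_space_play: "prob_space (play K \<sigma>X \<sigma>Y t)"
  using play_in_prob_algebra[OF assms, of t] by (auto simp: space_prob_algebra)

lemma sets_action_law: "sets (action_law K \<sigma>X \<sigma>Y t) = sets (pair_space K)"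
  by (simp add: action_law_def)

lemma space_action_law: "space (action_law K \<sigma>X \<sigma>Y t) = {0..K} \<times> {0..K}"
  by (simp add: action_law_def space_pair_space)

lemma measurable_play_component:
  assumes "behavioral_strategy K \<sigma>X" "behavioral_strategy K \<sigma>Y"
  shows "(\<lambda>h. h t) \<in> play K \<sigma>X \<sigma>Y t \<rightarrow>\<^sub>M pair_space K"
  using measurable_hist_component[of t "Suc t" K] sets_play[OF assms]
  by (simp cong: measurable_cong_sets)

lemma prob_space_action_law:
  assumes "behavioral_strategy K \<sigma>X" "behavioral_strategy K \<sigma>Y"
  shows "prob_space (action_law K \<sigma>X \<sigma>Y t)"
  unfolding action_law_def
  using prob_space_play[OF assms] measurable_play_component[OF assms]
  by (intro prob_space.prob_space_distr) auto

lemma integral_action_law: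
  fixes F :: "real \<times> real \<Rightarrow> real"
  assumes "behavioral_strategy K \<sigma>X" "behavioral_strategy K \<sigma>Y"
    and "F \<in> borel_measurable (pair_space K)"
  shows "(\<integral>a. F a \<partial>action_law K \<sigma>X \<sigma>Y t) = (\<integral>h. F (h t) \<partial>play K \<sigma>X \<sigma>Y t)"
  unfolding action_law_def by (rule integral_distr[OF measurable_play_component[OF assms(1,2)] assms(3)])

lemma
  fixes f :: "real \<times> real \<Rightarrow> real"
  assumes "behavioral_strategy K \<sigma>X" "behavioral_strategy K \<sigma>Y"
    and f: "f \<in> borel_measurable (pair_space K)" "\<And>a. a \<in> {0..K} \<times> {0..K} \<Longrightarrow> \<bar>f a\<bar> \<le> B"
  shows integrable_action_law: "integrable (action_law K \<sigma>X \<sigma>Y t) f"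
    and abs_integral_action_law_le: "\<bar>\<integral>a. f a \<partial>action_law K \<sigma>X \<sigma>Y t\<bar> \<le> B"
proof -
  interpret prob_space "action_law K \<sigma>X \<sigma>Y t"
    by (rule prob_space_action_law[OF assms(1,2)])
  have fm: "f \<in> borel_measurable (action_law K \<sigma>X \<sigma>Y t)"
    using f(1) by (simp cong: measurable_cong_sets[OF sets_action_law refl])
  show i: "integrable (action_law K \<sigma>X \<sigma>Y t) f"
    using fm f(2) by (intro integrable_const_bound[where B=B]) (auto simp: space_action_law)
  have "\<bar>\<integral>a. f a \<partial>action_law K \<sigma>X \<sigma>Y t\<bar> \<le> (\<integral>a. \<bar>f a\<bar> \<partial>action_law K \<sigma>X \<sigma>Y t)"
    by (rule integral_abs_bound)
  also have "\<dots> \<le> B"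
    using i f(2) by (intro integral_le_const) (auto simp: space_action_law)
  finally show "\<bar>\<integral>a. f a \<partial>action_law K \<sigma>X \<sigma>Y t\<bar> \<le> B" .
qed

subsection \<open>The expected action of X\<close>

lemma integral_fst_pair_measure:
  fixes G :: "real \<Rightarrow> real"
  assumes M: "M \<in> space (prob_algebra (act_space K))" and N: "N \<in> space (prob_algebra (act_space K))"
    and G: "G \<in> borel_measurable (act_space K)"
  shows "(\<integral>a. G (fst a) \<partial>(M \<Otimes>\<^sub>M N)) = (\<integral>x. G x \<partial>M)"
proof -
  interpret N: prob_space N
    using N by (simp add: space_prob_algebra)
  have "G \<in> borel_measurable M"
    using M G by (simp add: space_prob_algebra cong: measurable_cong_sets)
  then have "(\<integral>x. G x \<partial>distr (M \<Otimes>\<^sub>M N) M fst) = (\<integral>a. G (fst a) \<partial>(M \<Otimes>\<^sub>M N))"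
    by (intro integral_distr) auto
  then show ?thesis
    by (simp add: N.distr_pair_fst)
qed

lemma measurable_fst_hist_component:
  assumes "t < T" "G \<in> borel_measurable (act_space K)"
  shows "(\<lambda>h. G (fst (h t))) \<in> borel_measurable (hist_space K T)"
proof -
  have "fst \<in> pair_space K \<rightarrow>\<^sub>M act_space K"
    unfolding pair_space_def by simp
  with measurable_hist_component[OF assms(1)]
  have "(\<lambda>h. fst (h t)) \<in> hist_space K T \<rightarrow>\<^sub>M act_space K"
    by (rule measurable_compose)
  from measurable_compose[OF this assms(2)] show ?thesis .
qed

lemma integral_play_0_fst:
  fixes G :: "real \<Rightarrow> real"
  assumes X: "behavioral_strategy K \<sigma>X" and Y: "behavioral_strategy K \<sigma>Y"
    and G: "G \<in> borel_measurable (act_space K)"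
  shows "(\<integral>h. G (fst (h 0)) \<partial>play K \<sigma>X \<sigma>Y 0) = (\<integral>x. G x \<partial>\<sigma>X 0 (\<lambda>_. undefined))"
proof -
  let ?M = "\<sigma>X 0 (\<lambda>_. undefined) \<Otimes>\<^sub>M \<sigma>Y 0 (\<lambda>_. undefined)"
  have "(\<lambda>_. undefined) \<in> space (hist_space K 0)"
    unfolding hist_space_def by (simp add: space_PiM)
  note sx = behavioral_strategy_in_prob_algebra[OF X this]
    and sy = behavioral_strategy_in_prob_algebra[OF Y this]
  have "sets ?M = sets (pair_space K)"
    using sx sy unfolding pair_space_def
    by (intro sets_pair_measure_cong) (auto simp: space_prob_algebra)
  moreover have "(\<lambda>a. (\<lambda>i\<in>{..<1::nat}. a)) \<in> pair_space K \<rightarrow>\<^sub>M hist_space K 1"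
    unfolding hist_space_def by (rule measurable_restrict) auto
  ultimately have "(\<lambda>a. (\<lambda>i\<in>{..<1::nat}. a)) \<in> ?M \<rightarrow>\<^sub>M hist_space K 1"
    by (simp cong: measurable_cong_sets)
  moreover have "(\<lambda>h. G (fst (h 0))) \<in> borel_measurable (hist_space K 1)"
    by (rule measurable_fst_hist_component[OF _ G]) simp
  ultimately have "(\<integral>h. G (fst (h 0)) \<partial>play K \<sigma>X \<sigma>Y 0) = (\<integral>a. G (fst a) \<partial>?M)"
    unfolding play.simps by (subst integral_distr) simp_all
  also have "\<dots> = (\<integral>x. G x \<partial>\<sigma>X 0 (\<lambda>_. undefined))"
    by (rule integral_fst_pair_measure[OF sx sy G])
  finally show ?thesis .
qed

lemma integral_play_step_fst:
  fixes G :: "real \<Rightarrow> real"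
  assumes X: "behavioral_strategy K \<sigma>X" and Y: "behavioral_strategy K \<sigma>Y"
    and G: "G \<in> borel_measurable (act_space K)" and h: "h \<in> space (hist_space K (Suc t))"
  shows "(\<integral>g. G (fst (g (Suc t)))
           \<partial>distr (\<sigma>X (Suc t) h \<Otimes>\<^sub>M \<sigma>Y (Suc t) h) (hist_space K (Suc (Suc t))) (\<lambda>a. h(Suc t := a)))
       = (\<integral>x. G x \<partial>\<sigma>X (Suc t) h)"
proof -
  note sx = behavioral_strategy_in_prob_algebra[OF X h]
    and sy = behavioral_strategy_in_prob_algebra[OF Y h]
  have "sets (\<sigma>X (Suc t) h \<Otimes>\<^sub>M \<sigma>Y (Suc t) h) = sets (pair_space K)"
    using sx sy unfolding pair_space_def
    by (intro sets_pair_measure_cong) (auto simp: space_prob_algebra)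
  moreover have "(\<lambda>a. h(Suc t := a)) \<in> pair_space K \<rightarrow>\<^sub>M hist_space K (Suc (Suc t))"
    using measurable_Pair2[OF measurable_hist_update h] by simp
  ultimately have "(\<integral>g. G (fst (g (Suc t)))
        \<partial>distr (\<sigma>X (Suc t) h \<Otimes>\<^sub>M \<sigma>Y (Suc t) h) (hist_space K (Suc (Suc t))) (\<lambda>a. h(Suc t := a)))
      = (\<integral>a. G (fst a) \<partial>(\<sigma>X (Suc t) h \<Otimes>\<^sub>M \<sigma>Y (Suc t) h))"
    using measurable_fst_hist_component[OF _ G, of "Suc t" "Suc (Suc t)"]
    by (subst integral_distr) (simp_all cong: measurable_cong_sets)
  also have "\<dots> = (\<integral>x. G x \<partial>\<sigma>X (Suc t) h)"
    by (rule integral_fst_pair_measure[OF sx sy G])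
  finally show ?thesis .
qed

lemma integral_play_Suc_fst:
  fixes G :: "real \<Rightarrow> real"
  assumes X: "behavioral_strategy K \<sigma>X" and Y: "behavioral_strategy K \<sigma>Y"
    and G: "G \<in> borel_measurable (act_space K)" and B: "\<And>x. x \<in> {0..K} \<Longrightarrow> \<bar>G x\<bar> \<le> B"
  shows "(\<integral>h. G (fst (h (Suc t))) \<partial>play K \<sigma>X \<sigma>Y (Suc t))
       = (\<integral>h. (\<integral>x. G x \<partial>\<sigma>X (Suc t) h) \<partial>play K \<sigma>X \<sigma>Y t)"
proof -
  let ?k = "\<lambda>h. distr (\<sigma>X (Suc t) h \<Otimes>\<^sub>M \<sigma>Y (Suc t) h) (hist_space K (Suc (Suc t))) (\<lambda>a. h(Suc t := a))"
  note k = measurable_play_step_kernel[OF X Y, of t]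
  note ss = sets_play[OF X Y, of t]
  have k': "?k \<in> play K \<sigma>X \<sigma>Y t \<rightarrow>\<^sub>M subprob_algebra (hist_space K (Suc (Suc t)))"
    using measurable_prob_algebraD[OF k] by (simp cong: measurable_cong_sets[OF ss refl])
  have fb: "\<bar>G (fst (h (Suc t)))\<bar> \<le> B" if "h \<in> space (hist_space K (Suc (Suc t)))" for h
    using measurable_space[OF measurable_hist_component that, of "Suc t"] B
    by (auto simp: space_pair_space mem_Times_iff)
  have "AE h in play K \<sigma>X \<sigma>Y t. emeasure (?k h) (space (?k h)) \<le> ennreal 1"
  proof (rule AE_I2)
    fix h assume "h \<in> space (play K \<sigma>X \<sigma>Y t)"
    then have "?k h \<in> space (prob_algebra (hist_space K (Suc (Suc t))))"
      using measurable_space[OF k] ss by (simp cong: sets_eq_imp_space_eq)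
    then have "prob_space (?k h)"
      by (simp add: space_prob_algebra)
    from prob_space.emeasure_space_1[OF this]
    show "emeasure (?k h) (space (?k h)) \<le> ennreal 1"
      by simp
  qed
  with prob_space_play[OF X Y, of t]
  have "(\<integral>h. G (fst (h (Suc t))) \<partial>play K \<sigma>X \<sigma>Y (Suc t))
      = (\<integral>h. (\<integral>g. G (fst (g (Suc t))) \<partial>?k h) \<partial>play K \<sigma>X \<sigma>Y t)"
    unfolding play.simps
    by (intro integral_bind[where B'=1 and B=B and K="hist_space K (Suc (Suc t))", OF _ _ k'])
       (auto intro: fb measurable_fst_hist_component[OF _ G] simp: prob_space_def)
  also have "\<dots> = (\<integral>h. (\<integral>x. G x \<partial>\<sigma>X (Suc t) h) \<partial>play K \<sigma>X \<sigma>Y t)"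
    using ss by (intro Bochner_Integration.integral_cong[OF refl] integral_play_step_fst[OF X Y G])
       (simp cong: sets_eq_imp_space_eq)
  finally show ?thesis .
qed

lemma memory_one_simps [simp]:
  "memory_one \<sigma>0 k 0 = (\<lambda>_. \<sigma>0)"
  "memory_one \<sigma>0 k (Suc t) = (\<lambda>h. k (h t))"
  by (simp_all add: memory_one_def fun_eq_iff)

lemma measurable_two_point:
  assumes K: "K > 0" and q: "q \<in> borel_measurable M"
    and q_bounds: "\<And>x. x \<in> space M \<Longrightarrow> 0 \<le> q x \<and> q x \<le> 1"
  shows "(\<lambda>x. two_point K (q x)) \<in> M \<rightarrow>\<^sub>M prob_algebra (act_space K)"
proof (rule measurable_prob_algebraI)
  show "prob_space (two_point K (q x))" if "x \<in> space M" for x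
    using q_bounds[OF that] K by (intro prob_space_two_point) auto
  show "(\<lambda>x. two_point K (q x)) \<in> M \<rightarrow>\<^sub>M subprob_algebra (act_space K)"
  proof (rule measurable_subprob_algebra)
    show "subprob_space (two_point K (q x))" if "x \<in> space M" for x
      using q_bounds[OF that] K by (intro prob_space_imp_subprob_space prob_space_two_point) auto
    fix A assume A: "A \<in> sets (act_space K)"
    have "(\<lambda>x. ennreal (1 - q x) * indicator A 0 + ennreal (q x) * indicator A K) \<in> borel_measurable M"
      using q by measurable
    then show "(\<lambda>x. emeasure (two_point K (q x)) A) \<in> borel_measurable M"
      using A by (simp add: emeasure_two_point)
  qed simp
qed

lemma memory_one_two_point_behavioral:
  assumes K: "K > 0" and p0: "0 \<le> p0" "p0 \<le> 1"
    and q: "q \<in> borel_measurable (pair_space K)"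
    and q_bounds: "\<And>a. a \<in> {0..K} \<times> {0..K} \<Longrightarrow> 0 \<le> q a \<and> q a \<le> 1"
  shows "behavioral_strategy K (memory_one (two_point K p0) (\<lambda>a. two_point K (q a)))"
  unfolding behavioral_strategy_def
proof
  fix T
  show "memory_one (two_point K p0) (\<lambda>a. two_point K (q a)) T \<in> hist_space K T \<rightarrow>\<^sub>M prob_algebra (act_space K)"
  proof (cases T)
    case 0
    have "two_point K p0 \<in> space (prob_algebra (act_space K))"
      using prob_space_two_point[OF K p0] by (simp add: space_prob_algebra)
    with 0 show ?thesis
      by (simp add: measurable_const)
  next
    case (Suc t)
    have "h t \<in> {0..K} \<times> {0..K}" if "h \<in> space (hist_space K (Suc t))" for h
      using measurable_space[OF measurable_hist_component that] by (simp add: space_pair_space)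
    with Suc show ?thesis
      using measurable_compose[OF measurable_hist_component q, of t "Suc t"] q_bounds
      by (simp add: measurable_two_point[OF K])
  qed
qed

lemma
  fixes G :: "real \<Rightarrow> real"
  assumes K: "K > 0" and p0: "0 \<le> p0" "p0 \<le> 1"
    and q: "q \<in> borel_measurable (pair_space K)"
    and q_bounds: "\<And>a. a \<in> {0..K} \<times> {0..K} \<Longrightarrow> 0 \<le> q a \<and> q a \<le> 1"
    and Y: "behavioral_strategy K \<sigma>Y"
    and G: "G \<in> borel_measurable (act_space K)" and G_bound: "\<And>x. x \<in> {0..K} \<Longrightarrow> \<bar>G x\<bar> \<le> B"
  defines "\<sigma>X \<equiv> memory_one (two_point K p0) (\<lambda>a. two_point K (q a))"
  shows integral_fst_memory_one_0:
      "(\<integral>a. G (fst a) \<partial>action_law K \<sigma>X \<sigma>Y 0) = (1 - p0) * G 0 + p0 * G K"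
    and integral_fst_memory_one_Suc:
      "(\<integral>a. G (fst a) \<partial>action_law K \<sigma>X \<sigma>Y (Suc t))
         = (\<integral>a. (1 - q a) * G 0 + q a * G K \<partial>action_law K \<sigma>X \<sigma>Y t)"
proof -
  have X: "behavioral_strategy K \<sigma>X"
    unfolding \<sigma>X_def by (rule memory_one_two_point_behavioral[OF K p0 q q_bounds])
  have Gfst: "(\<lambda>a. G (fst a)) \<in> borel_measurable (pair_space K)"
    unfolding pair_space_def using G by measurable
  have "(\<integral>a. G (fst a) \<partial>action_law K \<sigma>X \<sigma>Y 0) = (\<integral>x. G x \<partial>two_point K p0)"
    using integral_action_law[OF X Y Gfst] integral_play_0_fst[OF X Y G]
    by (simp add: \<sigma>X_def)
  then show "(\<integral>a. G (fst a) \<partial>action_law K \<sigma>X \<sigma>Y 0) = (1 - p0) * G 0 + p0 * G K"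
    using integral_two_point[OF K p0 G] by simp
  have "(\<integral>a. G (fst a) \<partial>action_law K \<sigma>X \<sigma>Y (Suc t))
      = (\<integral>h. (\<integral>x. G x \<partial>two_point K (q (h t))) \<partial>play K \<sigma>X \<sigma>Y t)"
    using integral_action_law[OF X Y Gfst] integral_play_Suc_fst[OF X Y G G_bound]
    by (simp add: \<sigma>X_def)
  also have "\<dots> = (\<integral>h. (1 - q (h t)) * G 0 + q (h t) * G K \<partial>play K \<sigma>X \<sigma>Y t)"
  proof (rule Bochner_Integration.integral_cong[OF refl])
    fix h assume "h \<in> space (play K \<sigma>X \<sigma>Y t)"
    then have "h t \<in> {0..K} \<times> {0..K}"
      using measurable_space[OF measurable_play_component[OF X Y]] by (simp add: space_pair_space)
    then show "(\<integral>x. G x \<partial>two_point K (q (h t))) = (1 - q (h t)) * G 0 + q (h t) * G K"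
      using q_bounds K G by (intro integral_two_point) auto
  qed
  also have "\<dots> = (\<integral>a. (1 - q a) * G 0 + q a * G K \<partial>action_law K \<sigma>X \<sigma>Y t)"
    using q by (intro integral_action_law[OF X Y, symmetric] borel_measurable_add borel_measurable_times) auto
  finally show "(\<integral>a. G (fst a) \<partial>action_law K \<sigma>X \<sigma>Y (Suc t))
      = (\<integral>a. (1 - q a) * G 0 + q a * G K \<partial>action_law K \<sigma>X \<sigma>Y t)" .
qed

subsection \<open>Discounted values\<close>

definition discounted_value :: "real \<Rightarrow> real
    \<Rightarrow> (nat \<Rightarrow> (nat \<Rightarrow> real \<times> real) \<Rightarrow> real measure)
    \<Rightarrow> (nat \<Rightarrow> (nat \<Rightarrow> real \<times> real) \<Rightarrow> real measure) \<Rightarrow> (real \<times> real \<Rightarrow> real) \<Rightarrow> real" where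
  "discounted_value K lam \<sigma>X \<sigma>Y f =
     (1 - lam) * (\<Sum>t. lam ^ t * (\<integral>a. f a \<partial>action_law K \<sigma>X \<sigma>Y t))"

lemma payoff_X_eq_discounted_value:
  "payoff_X b c K lam \<sigma>X \<sigma>Y = discounted_value K lam \<sigma>X \<sigma>Y (\<lambda>a. b (snd a) - c (fst a))"
  by (simp add: payoff_X_def discounted_value_def)

lemma payoff_Y_eq_discounted_value:
  "payoff_Y b c K lam \<sigma>X \<sigma>Y = discounted_value K lam \<sigma>X \<sigma>Y (\<lambda>a. b (fst a) - c (snd a))"
  by (simp add: payoff_Y_def discounted_value_def)

lemma summable_discounted_bounded:
  fixes x :: "nat \<Rightarrow> real"
  assumes "0 \<le> lam" "lam < 1" "\<And>t. \<bar>x t\<bar> \<le> B"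
  shows "summable (\<lambda>t. lam ^ t * x t)"
  by (rule summable_comparison_test'[where g="\<lambda>t. lam ^ t * B" and N=0])
     (use assms in \<open>auto simp: abs_mult intro!: summable_mult2 summable_geometric mult_left_mono\<close>)

lemma discounted_telescoping_sums:
  fixes x :: "nat \<Rightarrow> real"
  assumes "0 \<le> lam" "lam < 1" "\<And>t. \<bar>x t\<bar> \<le> B"
  shows "(\<lambda>t. lam ^ t * (lam * x (Suc t) - x t)) sums (- x 0)"
proof -
  have "(\<lambda>t. lam ^ t * x t) \<longlonglongrightarrow> 0"
    by (rule summable_LIMSEQ_zero[OF summable_discounted_bounded[OF assms]])
  from telescope_sums[OF this] show ?thesis
    by (simp add: algebra_simps)
qed

lemma discounted_value_linear:
  fixes f g :: "real \<times> real \<Rightarrow> real"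
  assumes X: "behavioral_strategy K \<sigma>X" and Y: "behavioral_strategy K \<sigma>Y"
    and lam: "0 \<le> lam" "lam < 1"
    and f: "f \<in> borel_measurable (pair_space K)" "\<And>a. a \<in> {0..K} \<times> {0..K} \<Longrightarrow> \<bar>f a\<bar> \<le> Bf"
    and g: "g \<in> borel_measurable (pair_space K)" "\<And>a. a \<in> {0..K} \<times> {0..K} \<Longrightarrow> \<bar>g a\<bar> \<le> Bg"
  shows "discounted_value K lam \<sigma>X \<sigma>Y (\<lambda>a. f a + r * g a + s)
       = discounted_value K lam \<sigma>X \<sigma>Y f + r * discounted_value K lam \<sigma>X \<sigma>Y g + s"
proof -
  let ?E = "\<lambda>h t. \<integral>a. h a \<partial>action_law K \<sigma>X \<sigma>Y t"
  have E: "?E (\<lambda>a. f a + r * g a + s) t = ?E f t + r * ?E g t + s" for t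
  proof -
    interpret prob_space "action_law K \<sigma>X \<sigma>Y t"
      by (rule prob_space_action_law[OF X Y])
    show ?thesis
      using integrable_action_law[OF X Y f] integrable_action_law[OF X Y g] by (simp add: prob_space)
  qed
  have "(\<lambda>t. lam ^ t * ?E f t) sums (\<Sum>t. lam ^ t * ?E f t)"
    and "(\<lambda>t. lam ^ t * ?E g t) sums (\<Sum>t. lam ^ t * ?E g t)"
    using lam abs_integral_action_law_le[OF X Y f] abs_integral_action_law_le[OF X Y g]
    by (auto intro!: summable_sums summable_discounted_bounded)
  moreover have "(\<lambda>t. lam ^ t * s) sums (s / (1 - lam))"
    using sums_mult2[OF geometric_sums[of lam], of s] lam by simp
  ultimately have "(\<lambda>t. lam ^ t * ?E f t + r * (lam ^ t * ?E g t) + lam ^ t * s)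
      sums ((\<Sum>t. lam ^ t * ?E f t) + r * (\<Sum>t. lam ^ t * ?E g t) + s / (1 - lam))"
    by (intro sums_add sums_mult)
  moreover have "(\<lambda>t. lam ^ t * ?E (\<lambda>a. f a + r * g a + s) t)
      = (\<lambda>t. lam ^ t * ?E f t + r * (lam ^ t * ?E g t) + lam ^ t * s)"
    by (unfold E) (simp add: algebra_simps)
  ultimately have "(\<Sum>t. lam ^ t * ?E (\<lambda>a. f a + r * g a + s) t)
      = (\<Sum>t. lam ^ t * ?E f t) + r * (\<Sum>t. lam ^ t * ?E g t) + s / (1 - lam)"
    by (simp add: sums_iff)
  then show ?thesis
    using lam unfolding discounted_value_def by (simp add: field_simps)
qed

lemma discounted_value_memory_one_two_point:
  fixes G :: "real \<Rightarrow> real"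
  assumes K: "K > 0" and p0: "0 \<le> p0" "p0 \<le> 1"
    and q: "q \<in> borel_measurable (pair_space K)"
    and q_bounds: "\<And>a. a \<in> {0..K} \<times> {0..K} \<Longrightarrow> 0 \<le> q a \<and> q a \<le> 1"
    and Y: "behavioral_strategy K \<sigma>Y" and lam: "0 \<le> lam" "lam < 1"
    and G: "G \<in> borel_measurable (act_space K)" and G_bound: "\<And>x. x \<in> {0..K} \<Longrightarrow> \<bar>G x\<bar> \<le> B"
    and G0: "G 0 = 0"
  shows "discounted_value K lam (memory_one (two_point K p0) (\<lambda>a. two_point K (q a))) \<sigma>Y
           (\<lambda>a. lam * G K * q a - G (fst a))
       = - (1 - lam) * G K * p0"
proof -
  define \<sigma>X where "\<sigma>X = memory_one (two_point K p0) (\<lambda>a. two_point K (q a))"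
  have X: "behavioral_strategy K \<sigma>X"
    unfolding \<sigma>X_def by (rule memory_one_two_point_behavioral[OF K p0 q q_bounds])
  have Gfst: "(\<lambda>a. G (fst a)) \<in> borel_measurable (pair_space K)"
    unfolding pair_space_def using G by measurable
  have Gfst_bound: "\<bar>G (fst a)\<bar> \<le> B" if "a \<in> {0..K} \<times> {0..K}" for a
    using that G_bound by (auto simp: mem_Times_iff)
  have q_abs: "\<bar>q a\<bar> \<le> 1" if "a \<in> {0..K} \<times> {0..K}" for a
    using q_bounds[OF that] by simp
  define x where "x t = (\<integral>a. G (fst a) \<partial>action_law K \<sigma>X \<sigma>Y t)" for t
  have x0: "x 0 = p0 * G K"
    using integral_fst_memory_one_0[OF K p0 q q_bounds Y G G_bound] G0 by (simp add: x_def \<sigma>X_def)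
  have "x (Suc t) = G K * (\<integral>a. q a \<partial>action_law K \<sigma>X \<sigma>Y t)" for t
    using integral_fst_memory_one_Suc[OF K p0 q q_bounds Y G G_bound] G0
    by (simp add: x_def \<sigma>X_def mult.commute)
  then have "(\<integral>a. lam * G K * q a - G (fst a) \<partial>action_law K \<sigma>X \<sigma>Y t) = lam * x (Suc t) - x t" for t
    using integrable_action_law[OF X Y q q_abs] integrable_action_law[OF X Y Gfst Gfst_bound]
    by (simp add: x_def)
  moreover have "(\<lambda>t. lam ^ t * (lam * x (Suc t) - x t)) sums (- x 0)"
    using abs_integral_action_law_le[OF X Y Gfst Gfst_bound]
    by (intro discounted_telescoping_sums[OF lam]) (simp add: x_def)
  ultimately show ?thesis
    using x0 by (simp add: discounted_value_def sums_iff \<sigma>X_def) (simp add: algebra_simps)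
qed

lemma memory_one_enforces_payoff_relation:
  fixes b c q :: "real \<Rightarrow> real"
  assumes K: "K > 0"
    and b_meas: "b \<in> borel_measurable (act_space K)" and c_meas: "c \<in> borel_measurable (act_space K)"
    and b_bound: "\<And>y. y \<in> {0..K} \<Longrightarrow> \<bar>b y\<bar> \<le> M"
    and c_bound: "\<And>y. y \<in> {0..K} \<Longrightarrow> \<bar>c y\<bar> \<le> M"
    and b0: "b 0 = 0" and c0: "c 0 = 0"
    and lam: "0 \<le> lam" "lam < 1" and p0: "0 \<le> p0" "p0 \<le> 1"
    and q_meas: "q \<in> borel_measurable (act_space K)"
    and q_bounds: "\<And>y. y \<in> {0..K} \<Longrightarrow> 0 \<le> q y \<and> q y \<le> 1"
    and q_relation: "\<And>y. lam * (chi * b K + c K) * q y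
        = b y + chi * c y + (chi - 1) * kappa - (1 - lam) * (chi * b K + c K) * p0"
    and Y: "behavioral_strategy K \<sigma>Y"
  defines "\<sigma>X \<equiv> memory_one (two_point K p0) (\<lambda>a. two_point K (q (snd a)))"
  shows "payoff_X b c K lam \<sigma>X \<sigma>Y - kappa = chi * (payoff_Y b c K lam \<sigma>X \<sigma>Y - kappa)"
proof -
  note [measurable] = b_meas c_meas q_meas
  define G where "G x = chi * b x + c x" for x
  define C where "C = (1 - lam) * G K * p0 - (chi - 1) * kappa"
  have q_snd: "(\<lambda>a. q (snd a)) \<in> borel_measurable (pair_space K)"
    unfolding pair_space_def by measurable
  have q_snd_bounds: "0 \<le> q (snd a) \<and> q (snd a) \<le> 1" if "a \<in> {0..K} \<times> {0..K}" for a
    using that q_bounds by (auto simp: mem_Times_iff)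
  have X: "behavioral_strategy K \<sigma>X"
    unfolding \<sigma>X_def by (rule memory_one_two_point_behavioral[OF K p0 q_snd q_snd_bounds])
  have G_bound: "\<bar>G x\<bar> \<le> \<bar>chi\<bar> * M + M" if "x \<in> {0..K}" for x
    using b_bound[OF that] c_bound[OF that] unfolding G_def
    by (auto simp: abs_mult intro!: abs_triangle_ineq[THEN order_trans] add_mono mult_left_mono)
  have "b (snd a) - c (fst a) = (lam * G K * q (snd a) - G (fst a)) + chi * (b (fst a) - c (snd a)) + C" for a
    using q_relation[of "snd a"] unfolding G_def C_def by (simp add: algebra_simps)
  then have "payoff_X b c K lam \<sigma>X \<sigma>Y = discounted_value K lam \<sigma>X \<sigma>Y
      (\<lambda>a. (lam * G K * q (snd a) - G (fst a)) + chi * (b (fst a) - c (snd a)) + C)"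
    by (simp add: payoff_X_eq_discounted_value)
  also have "\<dots> = discounted_value K lam \<sigma>X \<sigma>Y (\<lambda>a. lam * G K * q (snd a) - G (fst a))
      + chi * payoff_Y b c K lam \<sigma>X \<sigma>Y + C"
  proof (unfold payoff_Y_eq_discounted_value, rule discounted_value_linear[OF X Y lam])
    show "\<bar>lam * G K * q (snd a) - G (fst a)\<bar> \<le> 2 * (\<bar>chi\<bar> * M + M)"
      if "a \<in> {0..K} \<times> {0..K}" for a
    proof -
      have "\<bar>G K\<bar> * (lam * q (snd a)) \<le> \<bar>G K\<bar>"
        using lam q_snd_bounds[OF that] by (intro mult_right_le_one_le mult_le_one) auto
      then have "\<bar>lam * G K * q (snd a)\<bar> \<le> \<bar>G K\<bar>"
        using lam q_snd_bounds[OF that] by (simp add: abs_mult mult_ac)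
      then show ?thesis
        using that K G_bound[of K] G_bound[of "fst a"] by (auto simp: mem_Times_iff)
    qed
    show "\<bar>b (fst a) - c (snd a)\<bar> \<le> 2 * M" if "a \<in> {0..K} \<times> {0..K}" for a
      using that b_bound[of "fst a"] c_bound[of "snd a"] by (auto simp: mem_Times_iff)
  qed (unfold pair_space_def G_def, measurable)
  also have "discounted_value K lam \<sigma>X \<sigma>Y (\<lambda>a. lam * G K * q (snd a) - G (fst a)) = - (1 - lam) * G K * p0"
    unfolding \<sigma>X_def using G_bound
    by (intro discounted_value_memory_one_two_point[OF K p0 q_snd q_snd_bounds Y lam])
       (auto simp: G_def b0 c0)
  finally show ?thesis
    unfolding C_def by (simp add: algebra_simps)
qed

lemma mono_on_atLeastAtMost_bounds:
  fixes f :: "'a::order \<Rightarrow> 'b::order"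
  assumes "mono_on {a..b} f" "y \<in> {a..b}"
  shows "f a \<le> f y \<and> f y \<le> f b"
  using assms by (auto intro: mono_onD)

lemma reaction_in_unit_interval:
  fixes lam D p0 s smin smax :: real
  assumes lam: "0 < lam" "lam < 1" and D: "0 < D" and s: "smin \<le> s" "s \<le> smax"
    and lower: "(smax - lam * D) / ((1 - lam) * D) \<le> p0"
    and upper: "p0 \<le> smin / ((1 - lam) * D)"
  shows "0 \<le> (1 / lam) * (s / D - (1 - lam) * p0) \<and> (1 / lam) * (s / D - (1 - lam) * p0) \<le> 1"
proof -
  have pos: "0 < (1 - lam) * D"
    using lam D by simp
  have "smax - lam * D \<le> (1 - lam) * D * p0" and "(1 - lam) * D * p0 \<le> smin"
    using lower upper pos by (simp_all add: pos_divide_le_eq pos_le_divide_eq mult.commute)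
  moreover have "(1 / lam) * (s / D - (1 - lam) * p0) = (s - (1 - lam) * D * p0) / (lam * D)"
    using lam D by (simp add: field_simps)
  ultimately show ?thesis
    using s lam D by (simp add: divide_le_eq_1)
qed

lemma donation_reaction_in_unit_interval:
  fixes b c :: "real \<Rightarrow> real"
  assumes b_y: "0 \<le> b y" "b y \<le> b K" and c_y: "0 \<le> c y" "c y \<le> c K"
    and chi: "chi \<ge> 1" and lam: "0 < lam" "lam < 1" and D: "0 < chi * b K + c K"
    and p0_lower: "((chi - 1) * kappa - lam * (chi * b K + c K) + b K + chi * c K)
                     / ((1 - lam) * (chi * b K + c K)) \<le> p0"
    and p0_upper: "p0 \<le> ((chi - 1) * kappa) / ((1 - lam) * (chi * b K + c K))"
  shows "0 \<le> (1 / lam) * ((b y + chi * c y + (chi - 1) * kappa) / (chi * b K + c K) - (1 - lam) * p0)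
    \<and> (1 / lam) * ((b y + chi * c y + (chi - 1) * kappa) / (chi * b K + c K) - (1 - lam) * p0) \<le> 1"
proof (rule reaction_in_unit_interval[OF lam D])
  have "0 \<le> chi * c y" "chi * c y \<le> chi * c K"
    using c_y chi by (auto intro: mult_left_mono)
  then show "(chi - 1) * kappa \<le> b y + chi * c y + (chi - 1) * kappa"
    and "b y + chi * c y + (chi - 1) * kappa \<le> b K + chi * c K + (chi - 1) * kappa"
    using b_y by linarith+
qed (use p0_lower p0_upper in \<open>simp_all add: algebra_simps\<close>)

theorem mainTheorem9:
  fixes b c :: "real \<Rightarrow> real" and K lam chi kappa p0 :: real
  assumes K_pos: "K > 0"
    and b_meas: "b \<in> borel_measurable (act_space K)"
    and c_meas: "c \<in> borel_measurable (act_space K)"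
    and b_mono: "mono_on {0..K} b" and c_mono: "mono_on {0..K} c"
    and b0: "b 0 = 0" and c0: "c 0 = 0"
    and bc: "\<forall>s\<in>{0<..K}. b s > c s"
    and lam: "0 < lam" "lam < 1"
    and chi: "chi \<ge> 1"
    and kappa: "0 \<le> kappa" "kappa \<le> b K - c K"
    and lam_bound: "lam \<ge> (b K + chi * c K) / (chi * b K + c K)"
    and p0: "0 \<le> p0" "p0 \<le> 1"
    and p0_lower: "((chi - 1) * kappa - lam * (chi * b K + c K) + b K + chi * c K)
                     / ((1 - lam) * (chi * b K + c K)) \<le> p0"
    and p0_upper: "p0 \<le> ((chi - 1) * kappa) / ((1 - lam) * (chi * b K + c K))"
  shows "let D = chi * b K + c K;
             p = (\<lambda>(x, y). (1 / lam) * ((b y + chi * c y + (chi - 1) * kappa) / D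
                                         - (1 - lam) * p0));
             \<sigma>X = memory_one (two_point K p0) (\<lambda>xy. two_point K (p xy))
         in (\<forall>x\<in>{0, K}. \<forall>y\<in>{0..K}. 0 \<le> p (x, y) \<and> p (x, y) \<le> 1)
            \<and> (\<forall>\<sigma>Y. behavioral_strategy K \<sigma>Y \<longrightarrow>
                 payoff_X b c K lam \<sigma>X \<sigma>Y - kappa
                   = chi * (payoff_Y b c K lam \<sigma>X \<sigma>Y - kappa))"
proof -
  define D where "D = chi * b K + c K"
  define q where "q y = (1 / lam) * ((b y + chi * c y + (chi - 1) * kappa) / D - (1 - lam) * p0)" for y
  have b_bounds: "0 \<le> b y \<and> b y \<le> b K" and c_bounds: "0 \<le> c y \<and> c y \<le> c K" if "y \<in> {0..K}" for y
    using mono_on_atLeastAtMost_bounds[OF b_mono that] mono_on_atLeastAtMost_bounds[OF c_mono that] b0 c0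
    by auto
  have "c K < b K" and "0 \<le> c K"
    using bc c_bounds[of K] K_pos by auto
  moreover from this have "b K \<le> chi * b K"
    using mult_right_mono[OF chi, of "b K"] by simp
  ultimately have D_pos: "D > 0"
    unfolding D_def by linarith
  have q_bounds: "0 \<le> q y \<and> q y \<le> 1" if "y \<in> {0..K}" for y
    using b_bounds[OF that] c_bounds[OF that] D_pos chi lam p0_lower p0_upper unfolding q_def D_def
    by (intro donation_reaction_in_unit_interval) auto
  have q_relation: "lam * D * q y = b y + chi * c y + (chi - 1) * kappa - (1 - lam) * D * p0" for y
    unfolding q_def using lam D_pos by (simp add: field_simps)
  have q_meas: "q \<in> borel_measurable (act_space K)"
    unfolding q_def using b_meas c_meas by measurable
  have p_eq: "(\<lambda>(x, y). (1 / lam) * ((b y + chi * c y + (chi - 1) * kappa) / (chi * b K + c K)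
      - (1 - lam) * p0)) = (\<lambda>a. q (snd a))"
    by (auto simp: q_def D_def)
  have "\<forall>\<sigma>Y. behavioral_strategy K \<sigma>Y \<longrightarrow>
      payoff_X b c K lam (memory_one (two_point K p0) (\<lambda>a. two_point K (q (snd a)))) \<sigma>Y - kappa
      = chi * (payoff_Y b c K lam (memory_one (two_point K p0) (\<lambda>a. two_point K (q (snd a)))) \<sigma>Y - kappa)"
    using memory_one_enforces_payoff_relation[OF K_pos b_meas c_meas _ _ b0 c0
        less_imp_le[OF lam(1)] lam(2) p0 q_meas q_bounds q_relation[unfolded D_def], of "b K + c K"]
      b_bounds c_bounds
    by fastforce
  with q_bounds show ?thesis
    unfolding Let_def p_eq by simp
qed

end
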